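(* Let $\psi$ be a saturation with saturation level $\alpha>0$ and $\mathbf{u}:[0,L]\to\mathbb{R}^P$ a given velocity, and consider the explicit finite-volume scheme for the system $\partial_t\boldsymbol{\rho}+\partial_x(\mathrm{diag}(\boldsymbol{\rho})\psi(\sigma)\mathbf{u})=0$ on $(0,L)$ described in the context. Fix $n$ and suppose $\boldsymbol{\rho}_i^n\ge0$ entry-wise and $\sigma_i^n\le\alpha$ for all $i$. Then $\boldsymbol{\rho}_i^{n+1}\ge0$ entry-wise and $\sigma_i^{n+1}\le\alpha$ for all $i$, provided $$\Delta t\le\frac{\Gamma}{4\|\mathbf{u}\|}\Delta x,\qquad \Gamma=\min\Big\{\frac{2}{\psi(0)},\gamma\Big\},\quad \gamma=\inf_{s\in(0,\alpha)}\frac{\alpha-s}{\alpha\psi(s)},\quad \|\mathbf{u}\|=\max_{i,p}|(\mathbf{u}_{i+1/2})_p|.$$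
   Context: A saturation is a continuous function $\psi:[0,\infty)\to\mathbb{R}$ that is non-increasing and for which there is $\alpha>0$ (the saturation level) with $\psi(\alpha)=0$ and $(\alpha-s)\psi(s)>0$ for $s\neq\alpha$. Discretisation: $\Delta x=L/M$, cells with centres $x_i=\Delta x(i-1/2)$ and interfaces $x_{i+1/2}$, $i=1,\dots,M$; $\boldsymbol{\rho}_i^n\in\mathbb{R}^P$ is the vector of $P$ species densities on cell $i$ at time $t^n=n\Delta t$, and $\sigma_i^n=\sum_{p=1}^P(\boldsymbol{\rho}_i^n)_p$. The scheme is $$\frac{\boldsymbol{\rho}_i^{n+1}-\boldsymbol{\rho}_i^n}{\Delta t}+\frac{\mathbf{F}_{i+1/2}^n-\mathbf{F}_{i-1/2}^n}{\Delta x}=0,\qquad \mathbf{F}_{i+1/2}^n=\mathrm{diag}(\boldsymbol{\rho}_i^E)\psi_{i+1}^W\mathbf{u}_{i+1/2}^++\mathrm{diag}(\boldsymbol{\rho}_{i+1}^W)\psi_i^E\mathbf{u}_{i+1/2}^-,$$ with $\mathbf{F}_{1/2}^n=\mathbf{F}_{M+1/2}^n=0$, $\mathbf{u}_{i+1/2}=\mathbf{u}(x_{i+1/2})$, where $(\cdot)^+=\max\{\cdot,0\}$, $(\cdot)^-=\min\{\cdot,0\}$ entry-wise; $\boldsymbol{\rho}_i^{E}=\boldsymbol{\rho}_i^n+\frac{\Delta x}{2}(\boldsymbol{\rho}_x)_i^n$, $\boldsymbol{\rho}_i^{W}=\boldsymbol{\rho}_i^n-\frac{\Delta x}{2}(\boldsymbol{\rho}_x)_i^n$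 with $(\boldsymbol{\rho}_x)_i^n=\mathrm{minmod}\big(\theta\frac{\boldsymbol{\rho}_{i+1}^n-\boldsymbol{\rho}_i^n}{\Delta x},\frac{\boldsymbol{\rho}_{i+1}^n-\boldsymbol{\rho}_{i-1}^n}{2\Delta x},\theta\frac{\boldsymbol{\rho}_i^n-\boldsymbol{\rho}_{i-1}^n}{\Delta x}\big)$ applied entry-wise; $\psi_i^E=\psi(\sigma_i^E)$, $\psi_i^W=\psi(\sigma_i^W)$ with $\sigma_i^{E}=\sigma_i^n+\frac{\Delta x}{2}(\sigma_x)_i^n$, $\sigma_i^{W}=\sigma_i^n-\frac{\Delta x}{2}(\sigma_x)_i^n$, $(\sigma_x)_i^n=\mathrm{minmod}\big(\theta\frac{\sigma_{i+1}^n-\sigma_i^n}{\Delta x},\frac{\sigma_{i+1}^n-\sigma_{i-1}^n}{2\Delta x},\theta\frac{\sigma_i^n-\sigma_{i-1}^n}{\Delta x}\big)$; $\theta=2$. Here $\mathrm{minmod}(a,b,c)=\min(a,b,c)$ if $a,b,c>0$, $\max(a,b,c)$ if $a,b,c<0$, and $0$ otherwise. The hypotheses on $\boldsymbol{\rho}_i^n$ apply to all values entering the slope computations. *)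

theory Defs
  imports Complex_Main
begin

definition saturation :: "(real \<Rightarrow> real) \<Rightarrow> real \<Rightarrow> bool" where
  "saturation psi alpha \<longleftrightarrow>
     continuous_on {0..} psi \<and>
     (\<forall>s t. 0 \<le> s \<longrightarrow> s \<le> t \<longrightarrow> psi t \<le> psi s) \<and>
     alpha > 0 \<and> psi alpha = 0 \<and>
     (\<forall>s. 0 \<le> s \<longrightarrow> s \<noteq> alpha \<longrightarrow> (alpha - s) * psi s > 0)"

definition minmod3 :: "real \<Rightarrow> real \<Rightarrow> real \<Rightarrow> real" where
  "minmod3 a b c =
     (if a > 0 \<and> b > 0 \<and> c > 0 then min a (min b c)
      else if a < 0 \<and> b < 0 \<and> c < 0 then max a (max b c) else 0)"

text \<open>Limited slope of a cell-indexed scalar quantity v at cell i (i \<ge> 1), theta = 2.\<close>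
definition slope :: "real \<Rightarrow> (nat \<Rightarrow> real) \<Rightarrow> nat \<Rightarrow> real" where
  "slope dx v i = minmod3 (2 * (v (i+1) - v i) / dx) ((v (i+1) - v (i-1)) / (2 * dx))
                          (2 * (v i - v (i-1)) / dx)"

definition recE :: "real \<Rightarrow> (nat \<Rightarrow> real) \<Rightarrow> nat \<Rightarrow> real" where
  "recE dx v i = v i + dx / 2 * slope dx v i"

definition recW :: "real \<Rightarrow> (nat \<Rightarrow> real) \<Rightarrow> nat \<Rightarrow> real" where
  "recW dx v i = v i - dx / 2 * slope dx v i"

text \<open>Species densities: rho i p, cell i (cells 1..M, ghost cells 0 and M+1), species p < P.\<close>
definition total :: "nat \<Rightarrow> (nat \<Rightarrow> nat \<Rightarrow> real) \<Rightarrow> nat \<Rightarrow> real" where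
  "total P rho i = (\<Sum>p<P. rho i p)"

text \<open>Numerical flux at interface x_{j+1/2} = dx * j, species p; zero at j = 0 and j = M.\<close>
definition flux :: "(real \<Rightarrow> real) \<Rightarrow> (real \<Rightarrow> nat \<Rightarrow> real) \<Rightarrow> nat \<Rightarrow> nat \<Rightarrow> real
                    \<Rightarrow> (nat \<Rightarrow> nat \<Rightarrow> real) \<Rightarrow> nat \<Rightarrow> nat \<Rightarrow> real" where
  "flux psi u P M dx rho j p =
     (if 1 \<le> j \<and> j < M then
        recE dx (\<lambda>i. rho i p) j * psi (recW dx (total P rho) (j+1)) * max (u (dx * real j) p) 0
      + recW dx (\<lambda>i. rho i p) (j+1) * psi (recE dx (total P rho) j) * min (u (dx * real j) p) 0
      else 0)"

definition step :: "(real \<Rightarrow> real) \<Rightarrow> (real \<Rightarrow> nat \<Rightarrow> real) \<Rightarrow> nat \<Rightarrow> nat \<Rightarrow> real \<Rightarrow> real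
                    \<Rightarrow> (nat \<Rightarrow> nat \<Rightarrow> real) \<Rightarrow> nat \<Rightarrow> nat \<Rightarrow> real" where
  "step psi u P M dx dt rho i p =
     rho i p - dt / dx * (flux psi u P M dx rho i p - flux psi u P M dx rho (i-1) p)"

definition unorm :: "(real \<Rightarrow> nat \<Rightarrow> real) \<Rightarrow> nat \<Rightarrow> nat \<Rightarrow> real \<Rightarrow> real" where
  "unorm u P M dx = Max ({\<bar>u (dx * real i) p\<bar> | i p. i \<in> {1..M} \<and> p < P} \<union> {0})"

definition gammaS :: "(real \<Rightarrow> real) \<Rightarrow> real \<Rightarrow> real" where
  "gammaS psi alpha = Inf ((\<lambda>s. (alpha - s) / (alpha * psi s)) ` {0<..<alpha})"

definition GammaS :: "(real \<Rightarrow> real) \<Rightarrow> real \<Rightarrow> real" where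
  "GammaS psi alpha = min (2 / psi 0) (gammaS psi alpha)"

end

theory Submission
  imports Defs
begin

(* The minmod limiter creates no new extrema: every reconstructed value lies between the cell value
   and its neighbour. Hence reconstructed densities are nonnegative, reconstructed totals lie in
   [0, alpha], and each upwind flux is bounded by ||u|| psi times a reconstructed density.

   Positivity: the outflow from cell i is at most ||u|| psi(0) (rho^E_i + rho^W_i) = 2 ||u|| psi(0) rho_i,
   which the CFL condition keeps below dx/dt rho_i.

   Saturation: mass enters cell i only through fluxes damped by psi of the receiving cell's own
   reconstructed totals, so the inflow is at most 2 ||u|| alpha (psi(sigma^W_i) + psi(sigma^E_i)).
   By the definition of gamma, gamma alpha psi(s) <= alpha - s, so under 4 dt ||u|| <= gamma dx the inflow
   is at most ((alpha - sigma^W_i) + (alpha - sigma^E_i)) / 2 = alpha - sigma_i. *)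

lemma minmod3_between:
  "min 0 a \<le> minmod3 a b c" "minmod3 a b c \<le> max 0 a"
  "min 0 c \<le> minmod3 a b c" "minmod3 a b c \<le> max 0 c"
  unfolding minmod3_def by auto

lemma half_slope_between:
  assumes "dx > 0"
  shows "min 0 (v (i+1) - v i) \<le> dx / 2 * slope dx v i"
    and "dx / 2 * slope dx v i \<le> max 0 (v (i+1) - v i)"
    and "min 0 (v i - v (i-1)) \<le> dx / 2 * slope dx v i"
    and "dx / 2 * slope dx v i \<le> max 0 (v i - v (i-1))"
proof -
  define a b c where "a = 2 * (v (i+1) - v i) / dx" and "b = (v (i+1) - v (i-1)) / (2 * dx)"
    and "c = 2 * (v i - v (i-1)) / dx"
  have "slope dx v i = minmod3 a b c"
    unfolding slope_def a_def b_def c_def ..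
  moreover have "v (i+1) - v i = dx / 2 * a" "v i - v (i-1) = dx / 2 * c"
    using assms unfolding a_def c_def by simp_all
  moreover have "min 0 (dx / 2 * t) = dx / 2 * min 0 t" "max 0 (dx / 2 * t) = dx / 2 * max 0 t" for t
    using assms by (simp_all add: min_mult_distrib_left max_mult_distrib_left)
  ultimately show "min 0 (v (i+1) - v i) \<le> dx / 2 * slope dx v i"
    "dx / 2 * slope dx v i \<le> max 0 (v (i+1) - v i)"
    "min 0 (v i - v (i-1)) \<le> dx / 2 * slope dx v i"
    "dx / 2 * slope dx v i \<le> max 0 (v i - v (i-1))"
    using assms minmod3_between[where a = a and b = b and c = c]
    by (metis mult_left_mono half_gt_zero less_imp_le)+
qed

lemma recE_between:
  "dx > 0 \<Longrightarrow> min (v i) (v (i+1)) \<le> recE dx v i \<and> recE dx v i \<le> max (v i) (v (i+1))"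
  using half_slope_between(1,2)[of dx v i] unfolding recE_def by linarith

lemma recW_between:
  "dx > 0 \<Longrightarrow> min (v (i-1)) (v i) \<le> recW dx v i \<and> recW dx v i \<le> max (v (i-1)) (v i)"
  using half_slope_between(3,4)[of dx v i] unfolding recW_def by linarith

lemma recE_add_recW: "recE dx v i + recW dx v i = 2 * v i"
  unfolding recE_def recW_def by simp

lemma saturation_psi_pos:
  "saturation psi alpha \<Longrightarrow> 0 \<le> s \<Longrightarrow> s < alpha \<Longrightarrow> psi s > 0"
  unfolding saturation_def by (metis diff_gt_0_iff_gt less_irrefl zero_less_mult_pos)

lemma saturation_psi0_pos: "saturation psi alpha \<Longrightarrow> psi 0 > 0"
  using saturation_psi_pos[of psi alpha 0] unfolding saturation_def by simp

lemma saturation_psi_bounds: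
  assumes "saturation psi alpha" "0 \<le> s" "s \<le> alpha"
  shows "0 \<le> psi s" "psi s \<le> psi 0"
  using assms unfolding saturation_def by (metis order.refl)+

lemma gammaS_le:
  assumes sat: "saturation psi alpha" and s: "0 < s" "s < alpha"
  shows "gammaS psi alpha \<le> (alpha - s) / (alpha * psi s)"
proof -
  have "(alpha - t) / (alpha * psi t) > 0" if "0 < t" "t < alpha" for t
    using that saturation_psi_pos[OF sat, of t] by simp
  then have "bdd_below ((\<lambda>t. (alpha - t) / (alpha * psi t)) ` {0<..<alpha})"
    by (auto intro!: bdd_belowI[where m = 0] less_imp_le)
  then show ?thesis
    unfolding gammaS_def using s by (auto intro: cInf_lower)
qed

lemma gammaS_mult_psi_le:
  assumes sat: "saturation psi alpha" and s: "0 \<le> s" "s \<le> alpha"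
  shows "gammaS psi alpha * alpha * psi s \<le> alpha - s"
proof -
  have alpha: "alpha > 0" and cont: "continuous_on {0..} psi" and "psi alpha = 0"
    using sat unfolding saturation_def by auto
  have interior: "gammaS psi alpha * alpha * psi t \<le> alpha - t" if "0 < t" "t < alpha" for t
    using gammaS_le[OF sat that] saturation_psi_pos[OF sat, of t] that alpha
    by (simp add: field_simps)
  consider "0 < s \<and> s < alpha" | "s = alpha" | (zero) "s = 0"
    using s by linarith
  then show ?thesis
  proof cases
    case zero
    \<comment> \<open>gamma is an infimum over the open interval only; s = 0 is reached by continuity of psi\<close>
    have "(psi \<longlongrightarrow> psi 0) (at_right 0)"
      using cont by (auto simp: continuous_on_def intro: tendsto_within_subset)
    then have "((\<lambda>t. gammaS psi alpha * alpha * psi t - (alpha - t))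
        \<longlongrightarrow> gammaS psi alpha * alpha * psi 0 - (alpha - 0)) (at_right 0)"
      by (intro tendsto_intros)
    moreover have "eventually (\<lambda>t. gammaS psi alpha * alpha * psi t - (alpha - t) \<le> 0) (at_right 0)"
      unfolding eventually_at_right_field using alpha interior by auto
    ultimately have "gammaS psi alpha * alpha * psi 0 - (alpha - 0) \<le> 0"
      by (rule tendsto_upperbound) simp
    then show ?thesis using zero by simp
  qed (use interior \<open>psi alpha = 0\<close> in auto)
qed

lemma upwind_flux_bounds:
  fixes a b x y w U :: real
  assumes "0 \<le> a" "0 \<le> b" "0 \<le> x" "0 \<le> y" "\<bar>w\<bar> \<le> U"
  shows "a * x * max w 0 + b * y * min w 0 \<le> U * x * a"
    and "- (a * x * max w 0 + b * y * min w 0) \<le> U * y * b"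
proof -
  have "max w 0 \<le> U" "- min w 0 \<le> U" "0 \<le> a * x" "0 \<le> b * y"
    using assms by auto
  then have "a * x * max w 0 \<le> a * x * U" "b * y * (- min w 0) \<le> b * y * U"
    "0 \<le> a * x * max w 0" "b * y * min w 0 \<le> 0"
    by (metis mult_left_mono max.cobounded2 min.cobounded2 mult_nonneg_nonneg mult_nonneg_nonpos)+
  then show "a * x * max w 0 + b * y * min w 0 \<le> U * x * a"
    and "- (a * x * max w 0 + b * y * min w 0) \<le> U * y * b"
    by (simp_all add: algebra_simps)
qed

lemma unorm_bounds:
  shows unorm_nonneg: "0 \<le> unorm u P M dx"
    and abs_le_unorm: "1 \<le> j \<Longrightarrow> j \<le> M \<Longrightarrow> p < P \<Longrightarrow> \<bar>u (dx * real j) p\<bar> \<le> unorm u P M dx"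
proof -
  have "{\<bar>u (dx * real i) p\<bar> | i p. i \<in> {1..M} \<and> p < P}
      = (\<lambda>(i, p). \<bar>u (dx * real i) p\<bar>) ` ({1..M} \<times> {..<P})"
    by force
  then have "finite ({\<bar>u (dx * real i) p\<bar> | i p. i \<in> {1..M} \<and> p < P} \<union> {0})"
    by simp
  then show "0 \<le> unorm u P M dx"
    and "1 \<le> j \<Longrightarrow> j \<le> M \<Longrightarrow> p < P \<Longrightarrow> \<bar>u (dx * real j) p\<bar> \<le> unorm u P M dx"
    unfolding unorm_def by (auto intro: Max_ge)
qed

lemma total_step:
  "total P (step psi u P M dx dt rho) i
     = total P rho i + dt / dx * (\<Sum>p<P. flux psi u P M dx rho (i-1) p - flux psi u P M dx rho i p)"
proof -
  have "step psi u P M dx dt rho i p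
      = rho i p + dt / dx * (flux psi u P M dx rho (i-1) p - flux psi u P M dx rho i p)" for p
    unfolding step_def by (simp add: algebra_simps)
  then show ?thesis
    unfolding total_def by (simp add: sum.distrib sum_distrib_left)
qed

locale scheme_state =
  fixes psi :: "real \<Rightarrow> real" and alpha :: real and u :: "real \<Rightarrow> nat \<Rightarrow> real"
    and P M :: nat and dx :: real and rho :: "nat \<Rightarrow> nat \<Rightarrow> real"
  assumes saturation: "saturation psi alpha"
    and dx_pos: "0 < dx"
    and rho_nonneg: "\<And>i p. i \<le> M + 1 \<Longrightarrow> p < P \<Longrightarrow> 0 \<le> rho i p"
    and total_le: "\<And>i. i \<le> M + 1 \<Longrightarrow> total P rho i \<le> alpha"
begin

abbreviation "F \<equiv> flux psi u P M dx rho"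
abbreviation "U \<equiv> unorm u P M dx"
abbreviation "\<sigma> \<equiv> total P rho"

lemma rec_species_nonneg:
  assumes "i \<le> M" "p < P"
  shows "0 \<le> recE dx (\<lambda>k. rho k p) i" "0 \<le> recW dx (\<lambda>k. rho k p) i"
proof -
  have "0 \<le> rho (i-1) p" "0 \<le> rho i p" "0 \<le> rho (i+1) p"
    using rho_nonneg assms by simp_all
  then show "0 \<le> recE dx (\<lambda>k. rho k p) i" "0 \<le> recW dx (\<lambda>k. rho k p) i"
    using recE_between[OF dx_pos, of "\<lambda>k. rho k p" i] recW_between[OF dx_pos, of "\<lambda>k. rho k p" i]
    by (meson min.boundedI order_trans)+
qed

lemma rec_species_le_twice:
  assumes "i \<le> M" "p < P"
  shows "recE dx (\<lambda>k. rho k p) i \<le> 2 * rho i p" "recW dx (\<lambda>k. rho k p) i \<le> 2 * rho i p"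
  using rec_species_nonneg[OF assms] recE_add_recW[of dx "\<lambda>k. rho k p" i] by linarith+

lemma rec_total_bounds:
  assumes "i \<le> M"
  shows "0 \<le> recE dx \<sigma> i" "recE dx \<sigma> i \<le> alpha" "0 \<le> recW dx \<sigma> i" "recW dx \<sigma> i \<le> alpha"
proof -
  have "0 \<le> \<sigma> k \<and> \<sigma> k \<le> alpha" if "k \<le> M + 1" for k
    using rho_nonneg that total_le[OF that] unfolding total_def by (auto intro: sum_nonneg)
  then have "0 \<le> \<sigma> k \<and> \<sigma> k \<le> alpha" if "k \<in> {i-1, i, i+1}" for k
    using that assms by auto
  then show "0 \<le> recE dx \<sigma> i" "recE dx \<sigma> i \<le> alpha" "0 \<le> recW dx \<sigma> i" "recW dx \<sigma> i \<le> alpha"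
    using recE_between[OF dx_pos, of \<sigma> i] recW_between[OF dx_pos, of \<sigma> i]
    by (smt (verit) insertCI)+
qed

lemma psi_rec_total_bounds:
  assumes "i \<le> M"
  shows "0 \<le> psi (recE dx \<sigma> i)" "psi (recE dx \<sigma> i) \<le> psi 0"
    "0 \<le> psi (recW dx \<sigma> i)" "psi (recW dx \<sigma> i) \<le> psi 0"
  using saturation_psi_bounds[OF saturation] rec_total_bounds[OF assms] by auto

lemma flux_boundary: "\<not> (1 \<le> j \<and> j < M) \<Longrightarrow> F j p = 0"
  unfolding flux_def by auto

lemma flux_interior_bounds:
  assumes j: "1 \<le> j" "j < M" and p: "p < P"
  shows "F j p \<le> U * psi (recW dx \<sigma> (j+1)) * recE dx (\<lambda>k. rho k p) j"
    and "- F j p \<le> U * psi (recE dx \<sigma> j) * recW dx (\<lambda>k. rho k p) (j+1)"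
proof -
  have "0 \<le> recE dx (\<lambda>k. rho k p) j" "0 \<le> recW dx (\<lambda>k. rho k p) (j+1)"
    using rec_species_nonneg j p by simp_all
  moreover have "0 \<le> psi (recW dx \<sigma> (j+1))" "0 \<le> psi (recE dx \<sigma> j)"
    using psi_rec_total_bounds j by simp_all
  moreover have "\<bar>u (dx * real j) p\<bar> \<le> U"
    using abs_le_unorm j p by simp
  ultimately show "F j p \<le> U * psi (recW dx \<sigma> (j+1)) * recE dx (\<lambda>k. rho k p) j"
    and "- F j p \<le> U * psi (recE dx \<sigma> j) * recW dx (\<lambda>k. rho k p) (j+1)"
    using j upwind_flux_bounds[of "recE dx (\<lambda>k. rho k p) j" "recW dx (\<lambda>k. rho k p) (j+1)"
        "psi (recW dx \<sigma> (j+1))" "psi (recE dx \<sigma> j)" "u (dx * real j) p" U]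
    unfolding flux_def by simp_all
qed

lemma flux_le_psi0_recE:
  assumes j: "j \<le> M" and p: "p < P"
  shows "F j p \<le> U * psi 0 * recE dx (\<lambda>k. rho k p) j"
proof (cases "1 \<le> j \<and> j < M")
  case True
  have "F j p \<le> U * psi (recW dx \<sigma> (j+1)) * recE dx (\<lambda>k. rho k p) j"
    using flux_interior_bounds(1) True p by simp
  also have "\<dots> \<le> U * psi 0 * recE dx (\<lambda>k. rho k p) j"
    using psi_rec_total_bounds(4)[of "j+1"] rec_species_nonneg(1)[of j p] True j p unorm_nonneg
    by (simp add: mult_left_mono mult_right_mono)
  finally show ?thesis .
next
  case False
  then show ?thesis
    using flux_boundary unorm_nonneg saturation_psi0_pos[OF saturation] rec_species_nonneg j p
    by simp
qed

lemma neg_flux_le_psi0_recW: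
  assumes j: "j < M" and p: "p < P"
  shows "- F j p \<le> U * psi 0 * recW dx (\<lambda>k. rho k p) (j+1)"
proof (cases "1 \<le> j")
  case True
  have "- F j p \<le> U * psi (recE dx \<sigma> j) * recW dx (\<lambda>k. rho k p) (j+1)"
    using flux_interior_bounds(2) True j p by simp
  also have "\<dots> \<le> U * psi 0 * recW dx (\<lambda>k. rho k p) (j+1)"
    using psi_rec_total_bounds(2)[of j] rec_species_nonneg(2)[of "j+1" p] j p unorm_nonneg
    by (simp add: mult_left_mono mult_right_mono)
  finally show ?thesis .
next
  case False
  then show ?thesis
    using flux_boundary unorm_nonneg saturation_psi0_pos[OF saturation] rec_species_nonneg j p
    by simp
qed

lemma flux_le_twice_rho:
  assumes j: "j < M" and p: "p < P"
  shows "F j p \<le> U * psi (recW dx \<sigma> (j+1)) * (2 * rho j p)"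
proof (cases "1 \<le> j")
  case True
  have "F j p \<le> U * psi (recW dx \<sigma> (j+1)) * recE dx (\<lambda>k. rho k p) j"
    using flux_interior_bounds(1) True j p by simp
  also have "\<dots> \<le> U * psi (recW dx \<sigma> (j+1)) * (2 * rho j p)"
    using psi_rec_total_bounds(3)[of "j+1"] rec_species_le_twice(1)[of j p] j p unorm_nonneg
    by (simp add: mult_left_mono)
  finally show ?thesis .
next
  case False
  then show ?thesis
    using flux_boundary unorm_nonneg psi_rec_total_bounds(3)[of "j+1"] rho_nonneg[of j p] j p
    by simp
qed

lemma neg_flux_le_twice_rho:
  assumes j: "j \<le> M" and p: "p < P"
  shows "- F j p \<le> U * psi (recE dx \<sigma> j) * (2 * rho (j+1) p)"
proof (cases "1 \<le> j \<and> j < M")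
  case True
  have "- F j p \<le> U * psi (recE dx \<sigma> j) * recW dx (\<lambda>k. rho k p) (j+1)"
    using flux_interior_bounds(2) True p by simp
  also have "\<dots> \<le> U * psi (recE dx \<sigma> j) * (2 * rho (j+1) p)"
    using psi_rec_total_bounds(1)[of j] rec_species_le_twice(2)[of "j+1" p] True j p unorm_nonneg
    by (simp add: mult_left_mono)
  finally show ?thesis .
next
  case False
  then show ?thesis
    using flux_boundary unorm_nonneg psi_rec_total_bounds(1)[of j] rho_nonneg[of "j+1" p] j p
    by simp
qed

lemma step_nonneg:
  assumes dt: "0 \<le> dt" and cfl: "2 * (dt / dx) * U * psi 0 \<le> 1"
    and i: "1 \<le> i" "i \<le> M" and p: "p < P"
  shows "0 \<le> step psi u P M dx dt rho i p"
proof -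
  have "F i p - F (i-1) p
      \<le> U * psi 0 * recE dx (\<lambda>k. rho k p) i + U * psi 0 * recW dx (\<lambda>k. rho k p) i"
    using flux_le_psi0_recE[of i p] neg_flux_le_psi0_recW[of "i-1" p] i p by fastforce
  also have "\<dots> = U * psi 0 * (2 * rho i p)"
    using recE_add_recW[of dx "\<lambda>k. rho k p" i] by (simp add: distrib_left[symmetric])
  finally have "dt / dx * (F i p - F (i-1) p) \<le> dt / dx * (U * psi 0 * (2 * rho i p))"
    using dt dx_pos by (intro mult_left_mono) simp_all
  also have "\<dots> = (2 * (dt / dx) * U * psi 0) * rho i p"
    by simp
  also have "\<dots> \<le> 1 * rho i p"
    using cfl rho_nonneg[of i p] i p by (intro mult_right_mono) simp_all
  finally show ?thesis
    unfolding step_def by simp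
qed

lemma total_step_le:
  assumes dt: "0 \<le> dt" and cfl: "4 * (dt / dx) * U \<le> gammaS psi alpha"
    and i: "1 \<le> i" "i \<le> M"
  shows "total P (step psi u P M dx dt rho) i \<le> alpha"
proof -
  define \<psi>W \<psi>E where "\<psi>W = psi (recW dx \<sigma> i)" and "\<psi>E = psi (recE dx \<sigma> i)"
  have \<psi>: "0 \<le> \<psi>W" "0 \<le> \<psi>E"
    unfolding \<psi>W_def \<psi>E_def using psi_rec_total_bounds i by simp_all
  have "(\<Sum>p<P. F (i-1) p - F i p) \<le> (\<Sum>p<P. U * \<psi>W * (2 * rho (i-1) p) + U * \<psi>E * (2 * rho (i+1) p))"
    using flux_le_twice_rho[of "i-1"] neg_flux_le_twice_rho[of i] i
    unfolding \<psi>W_def \<psi>E_def by (intro sum_mono) (fastforce intro: add_mono)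
  also have "\<dots> = 2 * U * (\<psi>W * \<sigma> (i-1) + \<psi>E * \<sigma> (i+1))"
    unfolding total_def by (simp add: sum.distrib sum_distrib_left algebra_simps)
  also have "\<dots> \<le> 2 * U * (\<psi>W * alpha + \<psi>E * alpha)"
    using total_le[of "i-1"] total_le[of "i+1"] i \<psi> unorm_nonneg
    by (intro mult_left_mono add_mono) simp_all
  finally have "dt / dx * (\<Sum>p<P. F (i-1) p - F i p)
      \<le> dt / dx * (2 * U * (\<psi>W * alpha + \<psi>E * alpha))"
    using dt dx_pos by (intro mult_left_mono) simp_all
  also have "\<dots> = (4 * (dt / dx) * U) * (alpha * (\<psi>W + \<psi>E) / 2)"
    using dx_pos by (simp add: field_simps)
  also have "\<dots> \<le> gammaS psi alpha * (alpha * (\<psi>W + \<psi>E) / 2)"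
    using cfl \<psi> saturation unfolding saturation_def by (intro mult_right_mono) simp_all
  also have "\<dots> = (gammaS psi alpha * alpha * \<psi>W + gammaS psi alpha * alpha * \<psi>E) / 2"
    by (simp add: algebra_simps)
  also have "\<dots> \<le> ((alpha - recW dx \<sigma> i) + (alpha - recE dx \<sigma> i)) / 2"
    using gammaS_mult_psi_le[OF saturation, of "recW dx \<sigma> i"]
      gammaS_mult_psi_le[OF saturation, of "recE dx \<sigma> i"] rec_total_bounds[of i] i
    unfolding \<psi>W_def \<psi>E_def by simp
  also have "\<dots> = alpha - \<sigma> i"
    using recE_add_recW[of dx \<sigma> i] by simp
  finally show ?thesis
    unfolding total_step by simp
qed

end

theorem proposition3p3:
  fixes psi :: "real \<Rightarrow> real" and alpha L dx dt :: real and M P :: nat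
    and u :: "real \<Rightarrow> nat \<Rightarrow> real" and rho :: "nat \<Rightarrow> nat \<Rightarrow> real"
  assumes sat: "saturation psi alpha"
    and L: "L > 0" and M: "M \<ge> 1" and dx: "dx = L / real M" and dt: "dt > 0"
    and nonneg: "\<forall>i\<le>M+1. \<forall>p<P. rho i p \<ge> 0"
    and bound: "\<forall>i\<le>M+1. total P rho i \<le> alpha"
    and cfl: "dt * (4 * unorm u P M dx) \<le> GammaS psi alpha * dx"
  shows "\<forall>i\<in>{1..M}. (\<forall>p<P. step psi u P M dx dt rho i p \<ge> 0)
                     \<and> total P (step psi u P M dx dt rho) i \<le> alpha"
proof -
  have dx_pos: "0 < dx"
    using L M dx by simp
  interpret scheme_state psi alpha u P M dx rho
    using sat dx_pos nonneg bound by unfold_locales auto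
  have cfl': "4 * (dt / dx) * U \<le> GammaS psi alpha"
    using cfl dx_pos by (simp add: field_simps)
  then have "2 * (dt / dx) * U * psi 0 \<le> 1"
    using saturation_psi0_pos[OF sat] dx_pos unfolding GammaS_def by (simp add: field_simps)
  moreover have "4 * (dt / dx) * U \<le> gammaS psi alpha"
    using cfl' unfolding GammaS_def by simp
  ultimately show ?thesis
    using step_nonneg total_step_le dt by simp
qed

end
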